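(* Fix an observation direction $\hat{\mathbf{x}}_0\in\mathbb{S}^2$ and choose $\mathbf{q}_0\in\mathbb{S}^2$ with $\mathbf{q}_0\cdot\hat{\mathbf{x}}_0\neq 0$; set $\mathbf{l}:=\frac{\hat{\mathbf{x}}_0\times \mathbf{q}_0}{|\hat{\mathbf{x}}_0\times \mathbf{q}_0|}$ and $\mathbf{m}:=\hat{\mathbf{x}}_0\times\mathbf{l}$. Let $\mathbf{e}\in\{\mathbf{l},\mathbf{m}\}$. If the set $$\{\alpha\in\mathbb{R}\;|\;\Pi_\alpha\subset S(\hat{\mathbf{x}}_0;\mathbf{J}),\ \hat{\mathbf{J}}_{\mathbf{e}}(\alpha)=0\}$$ has Lebesgue measure zero, then the strip $S(\hat{\mathbf{x}}_0;\mathbf{J})$ of the source support $D$ is uniquely determined by the data $\mathbf{e}\cdot\mathbf{E}^{\infty}(\hat{\mathbf{x}}_0,k;\mathbf{J})$ for all $k\in K$ at the single observation direction $\hat{\mathbf{x}}_0$.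
   Context: Time-harmonic Maxwell equations in $\mathbb{R}^3$ with constant $\epsilon,\mu>0$, zero conductivity: $\mathrm{curl}\,\mathbf{E}-i\omega\mu\mathbf{H}=0$, $\mathrm{curl}\,\mathbf{H}+i\omega\epsilon\mathbf{E}=\mathbf{J}$, with the Silver–Müller radiation condition; $k=\omega\sqrt{\epsilon\mu}$ ranges over $K=(k_{min},k_{max})$ with $0<k_{min}<k_{max}$. The source $\mathbf{J}\in(L^\infty(\mathbb{R}^3))^3$ has compact support in a bounded Lipschitz domain $D$ with connected complement. The electric far field pattern is $\mathbf{E}^{\infty}(\hat{\mathbf{x}},k;\mathbf{J})=i\omega\mu(\mathbb{I}-\hat{\mathbf{x}}\hat{\mathbf{x}}^{T})\int_{\mathbb{R}^3}e^{-ik\hat{\mathbf{x}}\cdot\mathbf{y}}\mathbf{J}(\mathbf{y})\,d\mathbf{y}$. The $\hat{\mathbf{x}}$-strip hull of $D$ is $S(\hat{\mathbf{x}};\mathbf{J}):=\{\mathbf{y}\in\mathbb{R}^3:\inf_{\mathbf{z}\in D}\mathbf{z}\cdot\hat{\mathbf{x}}\le\mathbf{y}\cdot\hat{\mathbf{x}}\le\sup_{\mathbf{z}\in D}\mathbf{z}\cdot\hat{\mathbf{x}}\}$, the smallest strip with normals $\pm\hat{\mathbf{x}}$ containing $\overline{D}$. For $\alpha\in\mathbb{R}$, $\Pi_\alpha:=\{\mathbf{y}\in\mathbb{R}^3:\mathbf{y}\cdot\hat{\mathbf{x}}_0+\alpha=0\}$ and $\hat{\mathbf{J}}_{\mathbf{e}}(\alpha):=\int_{\Pi_\alpha}\mathbf{e}\cdot\mathbf{J}(\mathbf{y})\,ds(\mathbf{y})$.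 *)

theory Defs
  imports "HOL-Analysis.Analysis"
begin

definition local_coords :: "real^3 \<Rightarrow> real^3^3 \<Rightarrow> real^2 \<Rightarrow> real \<Rightarrow> real^3" where
  "local_coords p Q u t = p + Q *v (\<chi> i. if i = 1 then u$1 else if i = 2 then u$2 else t)"

definition lipschitz_domain :: "(real^3) set \<Rightarrow> bool" where
  "lipschitz_domain D \<longleftrightarrow> open D \<and> bounded D \<and> connected D \<and> D \<noteq> {} \<and>
     (\<forall>p\<in>frontier D. \<exists>Q::real^3^3. \<exists>r>0. \<exists>h>0. \<exists>(g::real^2 \<Rightarrow> real) L.
        orthogonal_matrix Q \<and> L-lipschitz_on UNIV g \<and> g 0 = 0 \<and>
        (\<forall>u. norm u < r \<longrightarrow> \<bar>g u\<bar> < h) \<and>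
        (\<forall>u t. norm u < r \<and> \<bar>t\<bar> < h \<longrightarrow> (local_coords p Q u t \<in> D \<longleftrightarrow> t < g u)))"

text \<open>Electric far field pattern; omega = k / sqrt(eps*mu).\<close>
definition far_field :: "real \<Rightarrow> real \<Rightarrow> real^3 \<Rightarrow> real \<Rightarrow> (real^3 \<Rightarrow> complex^3) \<Rightarrow> complex^3" where
  "far_field eps mu x k J =
     (\<chi> i. \<i> * complex_of_real (k / sqrt (eps * mu)) * complex_of_real mu *
        (\<Sum>j\<in>UNIV. complex_of_real ((if i = j then 1 else 0) - x$i * x$j) *
           (LINT y|lborel. exp (- \<i> * complex_of_real (k * (x \<bullet> y))) * (J y $ j))))"

definition cdot :: "real^3 \<Rightarrow> complex^3 \<Rightarrow> complex" where
  "cdot e v = (\<Sum>i\<in>UNIV. complex_of_real (e$i) * v$i)"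

definition strip_hull :: "real^3 \<Rightarrow> (real^3) set \<Rightarrow> (real^3) set" where
  "strip_hull x D = {y. (INF z\<in>D. z \<bullet> x) \<le> y \<bullet> x \<and> y \<bullet> x \<le> (SUP z\<in>D. z \<bullet> x)}"

definition plane :: "real^3 \<Rightarrow> real \<Rightarrow> (real^3) set" where
  "plane x \<alpha> = {y. y \<bullet> x + \<alpha> = 0}"

text \<open>Surface integral over the plane Pi_alpha = {y. y.x0 + alpha = 0}, parametrised isometrically
  by y = -alpha x0 + u1 b1 + u2 b2 with (x0,b1,b2) orthonormal (surface measure = Lebesgue
  measure on R^2).\<close>
definition plane_integral :: "real^3 \<Rightarrow> real^3 \<Rightarrow> real^3 \<Rightarrow> real \<Rightarrow> (real^3 \<Rightarrow> complex) \<Rightarrow> complex" where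
  "plane_integral x b1 b2 \<alpha> f =
     (LINT u|(lborel :: (real^2) measure). f ((- \<alpha>) *\<^sub>R x + (u$1) *\<^sub>R b1 + (u$2) *\<^sub>R b2))"

definition J_hat :: "real^3 \<Rightarrow> real^3 \<Rightarrow> real^3 \<Rightarrow> real^3 \<Rightarrow> (real^3 \<Rightarrow> complex^3) \<Rightarrow> real \<Rightarrow> complex" where
  "J_hat x b1 b2 e J \<alpha> = plane_integral x b1 b2 \<alpha> (\<lambda>y. cdot e (J y))"

definition admissible_source :: "(real^3 \<Rightarrow> complex^3) \<Rightarrow> (real^3) set \<Rightarrow> bool" where
  "admissible_source J D \<longleftrightarrow> lipschitz_domain D \<and> connected (UNIV - closure D) \<and>
     J \<in> borel_measurable lborel \<and> (\<exists>B. AE y in lborel. norm (J y) \<le> B) \<and>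
     (\<forall>y. y \<notin> D \<longrightarrow> J y = 0)"

end

(* Since e is orthogonal to x0, the component e . E^infty(x0, k) is, up to the factor i omega mu,
   the three-dimensional Fourier transform of e . J at k x0.  Slicing R^3 into the planes Pi_alpha
   turns it into the one-dimensional Fourier transform at k of the plane integrals J_hat_e(alpha).
   J_hat_e is integrable and vanishes outside the bounded interval of those alpha for which Pi_alpha
   lies in the strip, so its Fourier transform extends to an entire function: knowing it on the
   interval K determines it everywhere, and Fourier uniqueness determines J_hat_e almost everywhere.
   Inside the strip J_hat_e vanishes only on a null set, so the strip is recovered as the essential
   support of J_hat_e. *)

theory Submission
  imports Defs "HOL-Probability.Levy" "HOL-Complex_Analysis.Conformal_Mappings"
begin

lemma integrable_iexp_mult:
  fixes f :: "real \<Rightarrow> complex"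
  assumes "integrable lborel f"
  shows "integrable lborel (\<lambda>t. iexp (k * t) * f t)"
proof (rule Bochner_Integration.integrable_bound[OF assms])
  show "(\<lambda>t. iexp (k * t) * f t) \<in> borel_measurable lborel"
    using borel_measurable_integrable[OF assms] by measurable
qed (simp add: norm_mult)

lemma normalized_density_real_distribution:
  fixes P :: "real \<Rightarrow> real"
  assumes P: "integrable lborel P" "\<And>t. 0 \<le> P t" and p: "integral\<^sup>L lborel P = p" "0 < p"
  shows "real_distribution (density lborel (\<lambda>t. ennreal (P t / p)))"
    and "char (density lborel (\<lambda>t. ennreal (P t / p))) k = (CLINT t|lborel. iexp (k * t) * P t) / p"
proof -
  have [measurable]: "P \<in> borel_measurable lborel" using P by auto
  have "emeasure (density lborel (\<lambda>t. ennreal (P t / p))) UNIV = (\<integral>\<^sup>+ t. ennreal (P t / p) \<partial>lborel)"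
    by (subst emeasure_density) auto
  also have "\<dots> = ennreal (LINT t|lborel. P t / p)"
    using P p by (intro nn_integral_eq_integral) auto
  also have "\<dots> = 1" using p by simp
  finally show "real_distribution (density lborel (\<lambda>t. ennreal (P t / p)))"
    using p by (intro real_distribution.intro prob_spaceI real_distribution_axioms.intro) auto
  have "char (density lborel (\<lambda>t. ennreal (P t / p))) k = (CLINT t|lborel. (P t / p) *\<^sub>R iexp (k * t))"
    unfolding char_def using P p by (subst integral_density) auto
  then show "char (density lborel (\<lambda>t. ennreal (P t / p))) k = (CLINT t|lborel. iexp (k * t) * P t) / p"
    by (simp add: scaleR_conv_of_real field_simps)
qed

lemma AE_eq_if_fourier_transform_eq_nonneg:
  fixes P N :: "real \<Rightarrow> real"
  assumes P: "integrable lborel P" "\<And>t. 0 \<le> P t" and N: "integrable lborel N" "\<And>t. 0 \<le> N t"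
    and FT: "\<And>k. (CLINT t|lborel. iexp (k * t) * P t) = (CLINT t|lborel. iexp (k * t) * N t)"
  shows "AE t in lborel. P t = N t"
proof -
  define p where "p = integral\<^sup>L lborel P"
  have pN: "integral\<^sup>L lborel N = p"
    using FT[of 0] unfolding p_def by simp
  have "p \<ge> 0" unfolding p_def using P by simp
  show ?thesis
  proof (cases "p = 0")
    case True
    have "AE t in lborel. P t = 0"
      using P True unfolding p_def by (simp add: integral_nonneg_eq_0_iff_AE)
    moreover have "AE t in lborel. N t = 0"
      using N True pN by (simp add: integral_nonneg_eq_0_iff_AE)
    ultimately show ?thesis by eventually_elim simp
  next
    case False
    with \<open>p \<ge> 0\<close> have "p > 0" by simp
    note distP = normalized_density_real_distribution[OF P p_def[symmetric] \<open>p > 0\<close>]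
    note distN = normalized_density_real_distribution[OF N pN \<open>p > 0\<close>]
    have "density lborel (\<lambda>t. ennreal (P t / p)) = density lborel (\<lambda>t. ennreal (N t / p))"
      by (rule Levy_uniqueness[OF distP(1) distN(1)]) (simp only: fun_eq_iff distP(2) distN(2) FT, simp)
    then have "AE t in lborel. ennreal (P t / p) = ennreal (N t / p)"
      using P N by (subst (asm) sigma_finite_measure.density_unique_iff[OF sigma_finite_lborel]) auto
    then show ?thesis
      by eventually_elim (use \<open>p > 0\<close> P N in \<open>simp add: ennreal_inj\<close>)
  qed
qed

lemma AE_zero_if_fourier_transform_zero_real:
  fixes A :: "real \<Rightarrow> real"
  assumes A: "integrable lborel A" and FT: "\<And>k. (CLINT t|lborel. iexp (k * t) * A t) = 0"
  shows "AE t in lborel. A t = 0"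
proof -
  define P N where "P t = max (A t) 0" and "N t = max (- A t) 0" for t
  have int: "integrable lborel P" "integrable lborel N"
    unfolding P_def N_def using A by (auto intro!: integrable_max)
  have A_eq: "A t = P t - N t" for t
    by (simp add: P_def N_def max_def)
  have FT_PN: "(CLINT t|lborel. iexp (k * t) * P t) = (CLINT t|lborel. iexp (k * t) * N t)" for k
  proof -
    have "(CLINT t|lborel. iexp (k * t) * P t) - (CLINT t|lborel. iexp (k * t) * N t)
        = (CLINT t|lborel. iexp (k * t) * P t - iexp (k * t) * N t)"
      using int by (intro Bochner_Integration.integral_diff[symmetric] integrable_iexp_mult integrable_of_real)
    also have "\<dots> = (CLINT t|lborel. iexp (k * t) * A t)"
      by (simp add: A_eq algebra_simps)
    finally show ?thesis using FT[of k] by simp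
  qed
  have "AE t in lborel. P t = N t"
    by (rule AE_eq_if_fourier_transform_eq_nonneg[OF int(1) _ int(2) _ FT_PN]) (simp_all add: P_def N_def)
  then show ?thesis by eventually_elim (simp add: P_def N_def max_def split: if_splits)
qed

lemma AE_zero_if_fourier_transform_zero:
  fixes H :: "real \<Rightarrow> complex"
  assumes H: "integrable lborel H" and FT: "\<And>k. (CLINT t|lborel. iexp (k * t) * H t) = 0"
  shows "AE t in lborel. H t = 0"
proof -
  have int: "integrable lborel (\<lambda>t. c * (iexp (k * t) * H t))" for c k
    using H by (intro integrable_mult_right integrable_iexp_mult)
  have "AE t in lborel. Re (c * H t) = 0" for c
  proof (rule AE_zero_if_fourier_transform_zero_real)
    show "integrable lborel (\<lambda>t. Re (c * H t))" using H by auto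
    fix k
    \<comment> \<open>\<open>Re w = (w + cnj w) / 2\<close>, and conjugation turns the transform at \<open>-k\<close> into the one at \<open>k\<close>.\<close>
    have pointwise: "iexp (k * t) * Re (c * H t)
        = (c * (iexp (k * t) * H t) + cnj (c * (iexp (- k * t) * H t))) / 2" for t
    proof -
      have "z * Re w = (z * w + z * cnj w) / 2" for z w :: complex
        by (simp add: complex_eq_iff algebra_simps)
      moreover have "cnj (c * (iexp (- k * t) * H t)) = iexp (k * t) * cnj (c * H t)"
        by (simp add: exp_cnj)
      ultimately show ?thesis by (simp only: mult.left_commute[of c])
    qed
    have "(CLINT t|lborel. iexp (k * t) * Re (c * H t))
        = (CLINT t|lborel. (c * (iexp (k * t) * H t) + cnj (c * (iexp (- k * t) * H t))) / 2)"
      by (simp only: pointwise)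
    also have "\<dots> = (c * (CLINT t|lborel. iexp (k * t) * H t) + cnj (c * (CLINT t|lborel. iexp (- k * t) * H t))) / 2"
      by (simp only: integral_divide_zero Bochner_Integration.integral_add[OF int integrable_cnj[OF int]]
          Bochner_Integration.integral_cnj integral_mult_right_zero)
    also have "\<dots> = 0"
      by (simp only: FT) simp
    finally show "(CLINT t|lborel. iexp (k * t) * Re (c * H t)) = 0" .
  qed
  from this[of 1] this[of "- \<i>"] show ?thesis
    by eventually_elim (simp add: complex_eq_iff)
qed

lemma norm_exp_series_term_le:
  fixes H :: "real \<Rightarrow> complex"
  assumes "\<And>t. R < \<bar>t\<bar> \<Longrightarrow> H t = 0"
  shows "norm ((\<i> * z * t) ^ n / fact n * H t) \<le> (norm z * R) ^ n / fact n * norm (H t)"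
proof (cases "\<bar>t\<bar> \<le> R")
  case True
  have "norm ((\<i> * z * t) ^ n / fact n * H t) = (norm z * \<bar>t\<bar>) ^ n / fact n * norm (H t)"
    by (simp add: norm_mult norm_divide norm_power power_mult_distrib)
  also have "\<dots> \<le> (norm z * R) ^ n / fact n * norm (H t)"
    using True by (intro mult_right_mono divide_right_mono power_mono mult_left_mono) auto
  finally show ?thesis .
qed (use assms in simp)

lemma fourier_transform_power_series:
  fixes H :: "real \<Rightarrow> complex" and z :: complex
  assumes H: "integrable lborel H" and supp: "\<And>t. R < \<bar>t\<bar> \<Longrightarrow> H t = 0" and "0 \<le> R"
  shows "(\<lambda>n. (CLINT t|lborel. (\<i> * t) ^ n / fact n * H t) * z ^ n) sums
         (CLINT t|lborel. exp (\<i> * z * t) * H t)"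
proof -
  have [measurable]: "H \<in> borel_measurable lborel" using H by auto
  define f where "f n t = (\<i> * z * t) ^ n / fact n * H t" for n t
  have [measurable]: "f n \<in> borel_measurable lborel" for n
    unfolding f_def by measurable
  have bound: "norm (f n t) \<le> (norm z * R) ^ n / fact n * norm (H t)" for n t
    unfolding f_def using supp by (rule norm_exp_series_term_le)
  have int_bound: "integrable lborel (\<lambda>t. (norm z * R) ^ n / fact n * norm (H t))" for n
    using H by auto
  have int_f: "integrable lborel (f n)" for n
    by (rule Bochner_Integration.integrable_bound[OF int_bound[of n]])
      (use bound \<open>0 \<le> R\<close> in \<open>auto simp: f_def abs_mult power_abs\<close>)
  have summable_norm_f: "summable (\<lambda>n. norm (f n t))" for t
  proof -
    have "norm (f n t) = inverse (fact n) * (norm z * \<bar>t\<bar>) ^ n * norm (H t)" for n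
      unfolding f_def by (simp add: norm_mult norm_divide norm_power power_mult_distrib field_simps)
    then show ?thesis using summable_mult2[OF summable_exp[of "norm z * \<bar>t\<bar>"], of "norm (H t)"]
      by simp
  qed
  have summable_integral: "summable (\<lambda>n. LINT t|lborel. norm (f n t))"
  proof (rule summable_comparison_test')
    show "summable (\<lambda>n. inverse (fact n) * (norm z * R) ^ n * (LINT t|lborel. norm (H t)))"
      by (intro summable_mult2 summable_exp)
    show "norm (LINT t|lborel. norm (f n t)) \<le> inverse (fact n) * (norm z * R) ^ n * (LINT t|lborel. norm (H t))"
      for n
    proof -
      have "norm (LINT t|lborel. norm (f n t)) = (LINT t|lborel. norm (f n t))" by simp
      also have "\<dots> \<le> (LINT t|lborel. (norm z * R) ^ n / fact n * norm (H t))"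
        by (rule integral_mono) (use int_f int_bound bound in auto)
      finally show ?thesis by (simp add: field_simps)
    qed
  qed
  have "(\<lambda>n. integral\<^sup>L lborel (f n)) sums (LINT t|lborel. (\<Sum>n. f n t))"
    by (rule sums_integral[OF int_f]) (use summable_norm_f summable_integral in auto)
  moreover have "(\<Sum>n. f n t) = exp (\<i> * z * t) * H t" for t
    using sums_mult2[OF exp_converges[of "\<i> * z * t"], of "H t"]
    by (simp add: f_def scaleR_conv_of_real divide_inverse sums_iff mult_ac)
  moreover have "integral\<^sup>L lborel (f n) = (CLINT t|lborel. (\<i> * t) ^ n / fact n * H t) * z ^ n" for n
  proof -
    have "f n = (\<lambda>t. (\<i> * t) ^ n / fact n * H t * z ^ n)"
      by (simp add: fun_eq_iff f_def power_mult_distrib mult_ac)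
    then show ?thesis by simp
  qed
  ultimately show ?thesis by simp
qed

lemma AE_zero_if_fourier_transform_zero_on_interval:
  fixes H :: "real \<Rightarrow> complex"
  assumes H: "integrable lborel H" and supp: "\<And>t. R < \<bar>t\<bar> \<Longrightarrow> H t = 0"
    and "a < b" and FT: "\<And>k. a < k \<Longrightarrow> k < b \<Longrightarrow> (CLINT t|lborel. iexp (k * t) * H t) = 0"
  shows "AE t in lborel. H t = 0"
proof -
  define c where "c n = (CLINT t|lborel. (\<i> * t) ^ n / fact n * H t)" for n
  have series: "(\<lambda>n. c n * z ^ n) sums (CLINT t|lborel. exp (\<i> * z * t) * H t)" for z
    unfolding c_def using supp
    by (intro fourier_transform_power_series[OF H, of "max R 0"]) auto
  define G where "G z = (\<Sum>n. c n * z ^ n)" for z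
  have G_eq: "G z = (CLINT t|lborel. exp (\<i> * z * t) * H t)" for z
    using series[of z] unfolding G_def by (simp add: sums_iff)
  \<comment> \<open>The transform of a compactly supported function extends to the entire function \<open>G\<close>.\<close>
  have "(G has_field_derivative (\<Sum>n. diffs c n * z ^ n)) (at z)" for z
    unfolding G_def[abs_def]
    by (rule termdiffs_strong_converges_everywhere) (use series in \<open>auto simp: sums_iff\<close>)
  then have "G holomorphic_on UNIV"
    unfolding holomorphic_on_def field_differentiable_def by (meson has_field_derivative_at_within)
  then have "G w = 0" for w
  proof (rule analytic_continuation[where U="complex_of_real ` {a<..<b}" and \<xi>="complex_of_real a"])
    show "complex_of_real a islimpt complex_of_real ` {a<..<b}"
      using \<open>a < b\<close> by (intro islimpt_isCont_image islimpt_greaterThanLessThan1) (auto simp: eventually_at_filter)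
    show "G z = 0" if "z \<in> complex_of_real ` {a<..<b}" for z
      using that FT by (auto simp: G_eq mult.assoc)
  qed auto
  then have "(CLINT t|lborel. iexp (k * t) * H t) = 0" for k
    using G_eq[of k] by (simp add: mult.assoc)
  then show ?thesis by (rule AE_zero_if_fourier_transform_zero[OF H])
qed

lemma prod_Basis_vec: "(\<Prod>b\<in>Basis. (x::real^'n) \<bullet> b) = (\<Prod>i\<in>UNIV. x $ i)"
proof -
  have Basis: "Basis = (\<lambda>i. axis i (1::real)) ` (UNIV :: 'n set)"
    by (auto simp: Basis_vec_def)
  have inj: "inj_on (\<lambda>i. axis i (1::real)) (UNIV :: 'n set)"
    by (auto intro!: inj_onI simp: axis_eq_axis)
  show ?thesis
    unfolding Basis by (subst prod.reindex[OF inj]) (simp add: inner_axis)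
qed

lemma emeasure_lborel_box_vec:
  fixes l u :: "real^'n"
  assumes "\<And>i. l $ i \<le> u $ i"
  shows "emeasure lborel (box l u) = ennreal (\<Prod>i\<in>UNIV. u $ i - l $ i)"
proof -
  have "\<forall>b\<in>Basis. l \<bullet> b \<le> u \<bullet> b"
    using assms by (auto simp: Basis_vec_def inner_axis)
  then show ?thesis
    by (simp add: emeasure_lborel_box_eq prod_Basis_vec)
qed

definition vec3_of_pair :: "real \<times> (real^2) \<Rightarrow> real^3" where
  "vec3_of_pair p = (\<chi> i. if i = 1 then fst p else if i = 2 then snd p $ 1 else snd p $ 2)"

lemma vec3_of_pair_measurable [measurable]: "vec3_of_pair \<in> borel_measurable (lborel \<Otimes>\<^sub>M lborel)"
proof -
  have "continuous_on UNIV (\<lambda>p. if i = 1 then fst p else if i = 2 then snd p $ 1 else snd p $ (2::2))"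
    for i :: 3 and p :: "real \<times> (real^2)"
    by (cases "i = 1"; cases "i = 2") (auto intro!: continuous_intros)
  then have "continuous_on UNIV vec3_of_pair"
    unfolding vec3_of_pair_def by (intro continuous_on_vec_lambda)
  then show ?thesis
    by (simp add: borel_measurable_continuous_onI lborel_prod measurable_lborel1)
qed

lemma vec3_of_pair_vimage_box:
  "vec3_of_pair -` box l u
    = {l$1<..<u$1} \<times> box (\<chi> j. if j = 1 then l $ 2 else l $ 3) (\<chi> j. if j = 1 then u $ 2 else u $ 3)"
proof (rule set_eqI)
  fix p :: "real \<times> (real^2)"
  show "p \<in> vec3_of_pair -` box l u
    \<longleftrightarrow> p \<in> {l$1<..<u$1} \<times> box (\<chi> j. if j = 1 then l $ 2 else l $ 3) (\<chi> j. if j = 1 then u $ 2 else u $ 3)"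
    by (cases p) (simp add: vec3_of_pair_def mem_box_cart forall_3 forall_2)
qed

lemma lborel_distr_vec3_of_pair: "distr (lborel \<Otimes>\<^sub>M lborel) borel vec3_of_pair = lborel"
proof (rule lborel_eqI[symmetric])
  fix l u :: "real^3"
  assume lu_Basis: "\<And>b. b \<in> Basis \<Longrightarrow> l \<bullet> b \<le> u \<bullet> b"
  have lu: "l $ i \<le> u $ i" for i
    using lu_Basis[of "axis i 1"] by (simp add: inner_axis)
  define l' u' :: "real^2"
    where "l' = (\<chi> j. if j = 1 then l $ 2 else l $ 3)" and "u' = (\<chi> j. if j = 1 then u $ 2 else u $ 3)"
  have "emeasure (distr (lborel \<Otimes>\<^sub>M lborel) borel vec3_of_pair) (box l u)
      = emeasure (lborel \<Otimes>\<^sub>M lborel) ({l$1<..<u$1} \<times> box l' u')"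
    by (subst emeasure_distr) (simp_all add: vec3_of_pair_vimage_box l'_def u'_def space_pair_measure)
  also have "\<dots> = emeasure lborel {l$1<..<u$1} * emeasure lborel (box l' u')"
    by (rule lborel.emeasure_pair_measure_Times) auto
  also have "\<dots> = ennreal (u$1 - l$1) * ennreal (\<Prod>j\<in>UNIV. u' $ j - l' $ j)"
  proof -
    have "l' $ j \<le> u' $ j" for j
      using lu by (simp add: l'_def u'_def)
    from emeasure_lborel_box_vec[OF this] show ?thesis
      by (simp only: emeasure_lborel_Ioo[OF lu])
  qed
  also have "\<dots> = ennreal ((u$1 - l$1) * (\<Prod>j\<in>UNIV. u' $ j - l' $ j))"
    using lu by (intro ennreal_mult[symmetric] prod_nonneg) (auto simp: l'_def u'_def)
  also have "(u$1 - l$1) * (\<Prod>j\<in>UNIV. u' $ j - l' $ j) = (\<Prod>i\<in>UNIV. u $ i - l $ i)"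
    by (simp only: UNIV_2 UNIV_3) (simp add: l'_def u'_def mult.assoc)
  also have "\<dots> = emeasure lborel (box l u)"
    by (rule emeasure_lborel_box_vec[OF lu, symmetric])
  also have "\<dots> = (\<Prod>b\<in>Basis. (u - l) \<bullet> b)"
    by (rule emeasure_lborel_box[OF lu_Basis])
  finally show "emeasure (distr (lborel \<Otimes>\<^sub>M lborel) borel vec3_of_pair) (box l u) = (\<Prod>b\<in>Basis. (u - l) \<bullet> b)" .
qed simp

lemma lborel_distr_orthogonal_transformation:
  fixes Q :: "real^'n::{finite,wellorder} \<Rightarrow> real^'n::_"
  assumes Q: "orthogonal_transformation Q"
  shows "distr lborel borel Q = lborel"
proof (rule lborel_eqI[symmetric])
  fix l u :: "real^'n::{finite,wellorder}"
  assume lu: "\<And>b. b \<in> Basis \<Longrightarrow> l \<bullet> b \<le> u \<bullet> b"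
  have "linear Q" using Q by (rule orthogonal_transformation_linear)
  then have Q_measurable [measurable]: "Q \<in> borel_measurable lborel"
    by (simp add: borel_measurable_continuous_onI linear_continuous_on linear_conv_bounded_linear)
  have preimage: "Q -` box l u = inv Q ` box l u"
    using orthogonal_transformation_bij[OF Q] by (rule bij_vimage_eq_inv_image)
  have inv_Q: "orthogonal_transformation (inv Q)"
    using Q by (rule orthogonal_transformation_inv)
  have "bounded (Q -` box l u)"
    unfolding preimage using orthogonal_transformation_linear[OF inv_Q]
    by (intro bounded_linear_image bounded_box) (simp add: linear_conv_bounded_linear)
  then have "emeasure lborel (Q -` box l u) = ennreal (measure lborel (Q -` box l u))"
    using emeasure_bounded_finite by (intro emeasure_eq_ennreal_measure) (simp add: less_top)
  then have "emeasure (distr lborel borel Q) (box l u) = ennreal (measure lborel (Q -` box l u))"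
    by (simp add: emeasure_distr)
  also have "measure lborel (Q -` box l u) = measure lebesgue (Q -` box l u)"
    using measurable_sets[OF Q_measurable, of "box l u"] by simp
  also have "\<dots> = measure lebesgue (box l u)"
    unfolding preimage by (rule measure_orthogonal_image[OF inv_Q]) simp
  finally show "emeasure (distr lborel borel Q) (box l u) = (\<Prod>b\<in>Basis. (u - l) \<bullet> b)"
    using lu by (simp add: emeasure_lborel_box_eq measure_def)
qed simp

definition plane_coords :: "real^3 \<Rightarrow> real^3 \<Rightarrow> real^3 \<Rightarrow> real \<times> (real^2) \<Rightarrow> real^3" where
  "plane_coords x b1 b2 p = (- fst p) *\<^sub>R x + (snd p $ 1) *\<^sub>R b1 + (snd p $ 2) *\<^sub>R b2"

lemma plane_coords_measurable [measurable]:
  "plane_coords x b1 b2 \<in> borel_measurable (lborel \<Otimes>\<^sub>M lborel)"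
proof -
  have "continuous_on UNIV (plane_coords x b1 b2)"
    unfolding plane_coords_def by (intro continuous_intros)
  then show ?thesis
    by (simp add: borel_measurable_continuous_onI lborel_prod measurable_lborel1)
qed

lemma inner_plane_coords:
  assumes "x \<bullet> x = 1" "x \<bullet> b1 = 0" "x \<bullet> b2 = 0"
  shows "plane_coords x b1 b2 (\<alpha>, u) \<bullet> x = - \<alpha>"
  using assms by (simp add: plane_coords_def inner_add_left inner_diff_left inner_commute[of b1] inner_commute[of b2])

lemma plane_integral_plane_coords:
  "plane_integral x b1 b2 \<alpha> f = (LINT u|lborel. f (plane_coords x b1 b2 (\<alpha>, u)))"
  by (simp add: plane_integral_def plane_coords_def)

locale orthonormal_frame =
  fixes x b1 b2 :: "real^3"
  assumes orthonormal: "x \<bullet> x = 1" "b1 \<bullet> b1 = 1" "b2 \<bullet> b2 = 1" "x \<bullet> b1 = 0" "x \<bullet> b2 = 0" "b1 \<bullet> b2 = 0"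
begin

lemma orthogonal_transformation_frame:
  "orthogonal_transformation (\<lambda>v::real^3. (- v $ 1) *\<^sub>R x + v $ 2 *\<^sub>R b1 + v $ 3 *\<^sub>R b2)"
  unfolding orthogonal_transformation_def
proof (intro conjI allI)
  show "linear (\<lambda>v::real^3. (- v $ 1) *\<^sub>R x + v $ 2 *\<^sub>R b1 + v $ 3 *\<^sub>R b2)"
    by (rule linearI) (simp_all add: algebra_simps)
  fix v w :: "real^3"
  have "v \<bullet> w = v $ 1 * w $ 1 + v $ 2 * w $ 2 + v $ 3 * w $ 3"
    by (simp add: inner_vec_def sum_3)
  then show "((- v $ 1) *\<^sub>R x + v $ 2 *\<^sub>R b1 + v $ 3 *\<^sub>R b2) \<bullet> ((- w $ 1) *\<^sub>R x + w $ 2 *\<^sub>R b1 + w $ 3 *\<^sub>R b2)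
      = v \<bullet> w"
    using orthonormal by (simp add: inner_add_left inner_add_right inner_commute[of b1 x] inner_commute[of b2 x]
        inner_commute[of b2 b1] algebra_simps)
qed

lemma lborel_distr_plane_coords: "distr (lborel \<Otimes>\<^sub>M lborel) borel (plane_coords x b1 b2) = lborel"
proof -
  let ?Q = "\<lambda>v::real^3. (- v $ 1) *\<^sub>R x + v $ 2 *\<^sub>R b1 + v $ 3 *\<^sub>R b2"
  have "plane_coords x b1 b2 = ?Q \<circ> vec3_of_pair"
    by (auto simp: fun_eq_iff plane_coords_def vec3_of_pair_def)
  moreover have "?Q \<in> borel_measurable borel"
    using orthogonal_transformation_linear[OF orthogonal_transformation_frame]
    by (simp add: borel_measurable_continuous_onI linear_continuous_on linear_conv_bounded_linear)
  ultimately have "distr (lborel \<Otimes>\<^sub>M lborel) borel (plane_coords x b1 b2)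
      = distr (distr (lborel \<Otimes>\<^sub>M lborel) borel vec3_of_pair) borel ?Q"
    by (simp add: distr_distr)
  then show ?thesis
    by (simp only: lborel_distr_vec3_of_pair lborel_distr_orthogonal_transformation[OF orthogonal_transformation_frame])
qed

lemma
  fixes f :: "real^3 \<Rightarrow> complex"
  assumes "integrable lborel f"
  shows integrable_plane_integral: "integrable lborel (\<lambda>\<alpha>. plane_integral x b1 b2 \<alpha> f)"
    and integral_eq_plane_integrals: "integral\<^sup>L lborel f = (LINT \<alpha>|lborel. plane_integral x b1 b2 \<alpha> f)"
proof -
  have f_measurable: "f \<in> borel_measurable borel" using assms by auto
  have "integrable (distr (lborel \<Otimes>\<^sub>M lborel) borel (plane_coords x b1 b2)) f"
    using assms by (simp add: lborel_distr_plane_coords)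
  then have int: "integrable (lborel \<Otimes>\<^sub>M lborel) (\<lambda>p. f (plane_coords x b1 b2 p))"
    by (simp add: integrable_distr_eq[OF plane_coords_measurable f_measurable])
  then show "integrable lborel (\<lambda>\<alpha>. plane_integral x b1 b2 \<alpha> f)"
    unfolding plane_integral_plane_coords by (rule lborel_pair.integrable_fst')
  have "integral\<^sup>L lborel f = integral\<^sup>L (distr (lborel \<Otimes>\<^sub>M lborel) borel (plane_coords x b1 b2)) f"
    by (simp add: lborel_distr_plane_coords)
  also have "\<dots> = integral\<^sup>L (lborel \<Otimes>\<^sub>M lborel) (\<lambda>p. f (plane_coords x b1 b2 p))"
    by (rule integral_distr[OF plane_coords_measurable f_measurable])
  also have "\<dots> = (LINT \<alpha>|lborel. plane_integral x b1 b2 \<alpha> f)"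
    unfolding plane_integral_plane_coords by (rule lborel_pair.integral_fst'[OF int, symmetric])
  finally show "integral\<^sup>L lborel f = (LINT \<alpha>|lborel. plane_integral x b1 b2 \<alpha> f)" .
qed

end

lemma norm_cdot_le: "norm (cdot e v) \<le> (\<Sum>i\<in>UNIV. \<bar>e $ i\<bar>) * norm v"
proof -
  have "norm (cdot e v) \<le> (\<Sum>i\<in>UNIV. norm (complex_of_real (e $ i) * v $ i))"
    unfolding cdot_def by (rule norm_sum)
  also have "\<dots> \<le> (\<Sum>i\<in>UNIV. \<bar>e $ i\<bar> * norm v)"
    by (intro sum_mono) (simp add: norm_mult mult_left_mono Finite_Cartesian_Product.norm_nth_le)
  finally show ?thesis by (simp add: sum_distrib_right)
qed

lemma cdot_0_left [simp]: "cdot 0 v = 0"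
  by (simp add: cdot_def)

lemma cdot_0_right [simp]: "cdot e 0 = 0"
  by (simp add: cdot_def)

lemma vec_nth_measurable [measurable (raw)]:
  fixes J :: "'a \<Rightarrow> complex^'n"
  assumes "J \<in> borel_measurable M"
  shows "(\<lambda>y. J y $ i) \<in> borel_measurable M"
  using measurable_compose[OF assms borel_measurable_continuous_onI[OF linear_continuous_on[OF bounded_linear_vec_nth]]]
  by simp

lemma cdot_measurable [measurable]:
  assumes [measurable]: "J \<in> borel_measurable M"
  shows "(\<lambda>y. cdot e (J y)) \<in> borel_measurable M"
  unfolding cdot_def by measurable

lemma cdot_far_field:
  fixes e x :: "real^3" and J :: "real^3 \<Rightarrow> complex^3"
  assumes "e \<bullet> x = 0"
    and int: "\<And>j. integrable lborel (\<lambda>y. exp (- \<i> * complex_of_real (k * (x \<bullet> y))) * J y $ j)"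
  shows "cdot e (far_field eps mu x k J) = \<i> * complex_of_real (k / sqrt (eps * mu)) * complex_of_real mu *
           (LINT y|lborel. exp (- \<i> * complex_of_real (k * (x \<bullet> y))) * cdot e (J y))"
proof -
  define I where "I j = (LINT y|lborel. exp (- \<i> * complex_of_real (k * (x \<bullet> y))) * J y $ j)" for j
  have "(LINT y|lborel. exp (- \<i> * complex_of_real (k * (x \<bullet> y))) * cdot e (J y))
      = (LINT y|lborel. (\<Sum>j\<in>UNIV. complex_of_real (e $ j) * (exp (- \<i> * complex_of_real (k * (x \<bullet> y))) * J y $ j)))"
    by (simp add: cdot_def sum_distrib_left mult_ac)
  also have "\<dots> = (\<Sum>j\<in>UNIV. complex_of_real (e $ j) * I j)"
    unfolding I_def using int by (subst Bochner_Integration.integral_sum) auto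
  finally have integral_eq: "(LINT y|lborel. exp (- \<i> * complex_of_real (k * (x \<bullet> y))) * cdot e (J y))
      = (\<Sum>j\<in>UNIV. complex_of_real (e $ j) * I j)" .
  \<comment> \<open>\<open>e\<close> is orthogonal to \<open>x\<close>, so it passes through the projection \<open>I - x x\<^sup>T\<close> unchanged.\<close>
  have "complex_of_real (e $ 1) * complex_of_real (x $ 1) + complex_of_real (e $ 2) * complex_of_real (x $ 2)
      + complex_of_real (e $ 3) * complex_of_real (x $ 3) = 0"
    using arg_cong[OF assms(1), of complex_of_real] by (simp add: inner_vec_def sum_3)
  then have "cdot e (far_field eps mu x k J)
      = \<i> * complex_of_real (k / sqrt (eps * mu)) * complex_of_real mu * (\<Sum>j\<in>UNIV. complex_of_real (e $ j) * I j)"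
    by (simp add: cdot_def far_field_def I_def sum_3) algebra
  then show ?thesis by (simp only: integral_eq)
qed

lemma admissible_source_bounded:
  assumes "admissible_source J D"
  obtains R where "\<And>y. R < norm y \<Longrightarrow> J y = 0"
proof -
  have "bounded D" using assms unfolding admissible_source_def lipschitz_domain_def by blast
  then obtain R where R: "\<And>y. y \<in> D \<Longrightarrow> norm y \<le> R" by (auto simp: bounded_iff)
  show thesis
  proof (rule that)
    fix y :: "real^3" assume "R < norm y"
    with R have "y \<notin> D" by force
    then show "J y = 0" using assms by (simp add: admissible_source_def)
  qed
qed

lemma integrable_if_norm_le_admissible_source:
  fixes g :: "real^3 \<Rightarrow> complex"
  assumes J: "admissible_source J D" and [measurable]: "g \<in> borel_measurable lborel"
    and g_le: "\<And>y. norm (g y) \<le> C * norm (J y)"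
  shows "integrable lborel g"
proof -
  obtain B where B: "AE y in lborel. norm (J y) \<le> B"
    using J unfolding admissible_source_def by blast
  obtain R where R: "\<And>y. R < norm y \<Longrightarrow> J y = 0"
    using admissible_source_bounded[OF J] by blast
  have "integrable lborel (\<lambda>y::real^3. (\<bar>C\<bar> * \<bar>B\<bar>) * indicator (cball 0 R) y :: real)"
    using emeasure_bounded_finite[of "cball (0::real^3) R"]
    by (intro integrable_mult_right integrable_real_indicator) auto
  then show ?thesis
  proof (rule Bochner_Integration.integrable_bound)
    show "AE y in lborel. norm (g y) \<le> norm (\<bar>C\<bar> * \<bar>B\<bar> * indicator (cball 0 R) y :: real)"
      using B
    proof eventually_elim
      case (elim y)
      show ?case
      proof (cases "norm y \<le> R")
        case True
        have "norm (g y) \<le> \<bar>C\<bar> * norm (J y)"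
          using g_le[of y] by (meson abs_ge_self mult_right_mono norm_ge_zero order_trans)
        also have "\<dots> \<le> \<bar>C\<bar> * \<bar>B\<bar>"
          using elim by (intro mult_left_mono) auto
        finally show ?thesis using True by simp
      qed (use g_le[of y] R[of y] in simp)
    qed
  qed simp
qed

lemma orthonormal_frame_cross3:
  fixes x q :: "real^3"
  assumes "norm x = 1" and "cross3 x q \<noteq> 0"
  defines "l \<equiv> (1 / norm (cross3 x q)) *\<^sub>R cross3 x q"
  shows "orthonormal_frame x l (cross3 x l)"
proof
  show "x \<bullet> x = 1" using assms(1) by (simp add: power2_norm_eq_inner[symmetric])
  show "l \<bullet> l = 1" unfolding l_def using assms(2)
    by (simp add: power2_norm_eq_inner[symmetric] power2_eq_square)
  show "x \<bullet> l = 0" "x \<bullet> cross3 x l = 0" "l \<bullet> cross3 x l = 0"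
    unfolding l_def by (simp_all add: dot_cross_self)
  have "(norm (cross3 x l))\<^sup>2 + (x \<bullet> l)\<^sup>2 = (norm x * norm l)\<^sup>2"
    by (rule norm_cross_dot)
  with \<open>l \<bullet> l = 1\<close> \<open>x \<bullet> l = 0\<close> assms(1) have "(norm (cross3 x l))\<^sup>2 = 1"
    by (simp add: norm_eq_sqrt_inner)
  then show "cross3 x l \<bullet> cross3 x l = 1" by (simp add: power2_norm_eq_inner)
qed

lemma J_hat_eq_0_if_plane_avoids_support:
  assumes "x \<bullet> x = 1" "x \<bullet> b1 = 0" "x \<bullet> b2 = 0" and "\<And>y. y \<in> plane x \<alpha> \<Longrightarrow> J y = 0"
  shows "J_hat x b1 b2 e J \<alpha> = 0"
proof -
  have "plane_coords x b1 b2 (\<alpha>, u) \<in> plane x \<alpha>" for u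
    using inner_plane_coords[OF assms(1-3)] by (simp add: plane_def)
  then show ?thesis
    using assms(4) by (simp add: J_hat_def plane_integral_plane_coords)
qed

lemma J_hat_eq_0_if_far:
  assumes "x \<bullet> x = 1" "x \<bullet> b1 = 0" "x \<bullet> b2 = 0" and R: "\<And>y. R < norm y \<Longrightarrow> J y = 0" and "R < \<bar>\<alpha>\<bar>"
  shows "J_hat x b1 b2 e J \<alpha> = 0"
proof (rule J_hat_eq_0_if_plane_avoids_support[OF assms(1-3)])
  fix y assume "y \<in> plane x \<alpha>"
  then have "\<bar>\<alpha>\<bar> = \<bar>y \<bullet> x\<bar>" by (simp add: plane_def)
  also have "\<dots> \<le> norm y * norm x" by (rule Cauchy_Schwarz_ineq2)
  also have "norm x = 1" using assms(1) by (simp add: norm_eq_sqrt_inner)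
  finally show "J y = 0" using R \<open>R < \<bar>\<alpha>\<bar>\<close> by simp
qed

context orthonormal_frame
begin

lemma integrable_J_hat:
  assumes "admissible_source J D"
  shows "integrable lborel (J_hat x b1 b2 e J)"
proof -
  have [measurable]: "J \<in> borel_measurable lborel" using assms by (simp add: admissible_source_def)
  have "integrable lborel (\<lambda>y. cdot e (J y))"
    using assms by (rule integrable_if_norm_le_admissible_source[where C="\<Sum>i\<in>UNIV. \<bar>e $ i\<bar>"])
      (auto simp: norm_cdot_le)
  then show ?thesis
    unfolding J_hat_def[abs_def] by (rule integrable_plane_integral)
qed

lemma far_field_component_eq_fourier_J_hat:
  assumes "e \<bullet> x = 0" and J: "admissible_source J D"
  shows "cdot e (far_field eps mu x k J)
    = \<i> * complex_of_real (k / sqrt (eps * mu)) * complex_of_real mu * (CLINT \<alpha>|lborel. iexp (k * \<alpha>) * J_hat x b1 b2 e J \<alpha>)"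
proof -
  have [measurable]: "J \<in> borel_measurable lborel" using J by (simp add: admissible_source_def)
  define f where "f y = exp (- \<i> * complex_of_real (k * (x \<bullet> y))) * cdot e (J y)" for y
  have [measurable]: "f \<in> borel_measurable lborel"
    unfolding f_def by measurable
  have "integrable lborel f"
    using J by (rule integrable_if_norm_le_admissible_source[where C="\<Sum>i\<in>UNIV. \<bar>e $ i\<bar>"])
      (auto simp: f_def norm_mult norm_cdot_le)
  then have "integral\<^sup>L lborel f = (LINT \<alpha>|lborel. plane_integral x b1 b2 \<alpha> f)"
    by (rule integral_eq_plane_integrals)
  also have "\<dots> = (CLINT \<alpha>|lborel. iexp (k * \<alpha>) * J_hat x b1 b2 e J \<alpha>)"
  proof (rule Bochner_Integration.integral_cong[OF refl])
    fix \<alpha>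
    \<comment> \<open>On the plane \<open>\<Pi>\<^sub>\<alpha>\<close> the phase \<open>-k x \<bullet> y = k \<alpha>\<close> is constant.\<close>
    have "f (plane_coords x b1 b2 (\<alpha>, u)) = iexp (k * \<alpha>) * cdot e (J (plane_coords x b1 b2 (\<alpha>, u)))" for u
      using inner_plane_coords[OF orthonormal(1,4,5), of \<alpha> u] by (simp add: f_def inner_commute)
    then show "plane_integral x b1 b2 \<alpha> f = iexp (k * \<alpha>) * J_hat x b1 b2 e J \<alpha>"
      by (simp add: plane_integral_plane_coords J_hat_def)
  qed
  finally have "integral\<^sup>L lborel f = (CLINT \<alpha>|lborel. iexp (k * \<alpha>) * J_hat x b1 b2 e J \<alpha>)" .
  moreover have "integrable lborel (\<lambda>y. exp (- \<i> * complex_of_real (k * (x \<bullet> y))) * J y $ j)" for j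
    using J by (rule integrable_if_norm_le_admissible_source[where C=1])
      (auto simp: norm_mult Finite_Cartesian_Product.norm_nth_le)
  ultimately show ?thesis
    unfolding f_def by (simp only: cdot_far_field[OF assms(1)])
qed

lemma J_hat_AE_eq_if_far_field_eq:
  assumes "e \<bullet> x = 0" and "eps > 0" "mu > 0" "0 \<le> kmin" "kmin < kmax"
    and J1: "admissible_source J1 D1" and J2: "admissible_source J2 D2"
    and far_field_eq: "\<forall>k\<in>{kmin<..<kmax}. cdot e (far_field eps mu x k J1) = cdot e (far_field eps mu x k J2)"
  shows "AE \<alpha> in lborel. J_hat x b1 b2 e J1 \<alpha> = J_hat x b1 b2 e J2 \<alpha>"
proof -
  define H where "H \<alpha> = J_hat x b1 b2 e J1 \<alpha> - J_hat x b1 b2 e J2 \<alpha>" for \<alpha>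
  have int: "integrable lborel (J_hat x b1 b2 e J1)" "integrable lborel (J_hat x b1 b2 e J2)"
    using integrable_J_hat J1 J2 by blast+
  obtain R1 where R1: "\<And>y. R1 < norm y \<Longrightarrow> J1 y = 0"
    using admissible_source_bounded[OF J1] by blast
  obtain R2 where R2: "\<And>y. R2 < norm y \<Longrightarrow> J2 y = 0"
    using admissible_source_bounded[OF J2] by blast
  have H_far: "H \<alpha> = 0" if "max R1 R2 < \<bar>\<alpha>\<bar>" for \<alpha>
    using that J_hat_eq_0_if_far[OF orthonormal(1,4,5) R1] J_hat_eq_0_if_far[OF orthonormal(1,4,5) R2]
    unfolding H_def by simp
  have FT_H: "(CLINT \<alpha>|lborel. iexp (k * \<alpha>) * H \<alpha>) = 0" if "kmin < k" "k < kmax" for k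
  proof -
    have "\<i> * complex_of_real (k / sqrt (eps * mu)) * complex_of_real mu \<noteq> 0"
      using that assms by auto
    moreover have "cdot e (far_field eps mu x k J1) = cdot e (far_field eps mu x k J2)"
      using far_field_eq that by simp
    ultimately have "(CLINT \<alpha>|lborel. iexp (k * \<alpha>) * J_hat x b1 b2 e J1 \<alpha>)
        = (CLINT \<alpha>|lborel. iexp (k * \<alpha>) * J_hat x b1 b2 e J2 \<alpha>)"
      by (simp only: far_field_component_eq_fourier_J_hat[OF assms(1) J1]
          far_field_component_eq_fourier_J_hat[OF assms(1) J2]) simp
    then show ?thesis
      unfolding H_def right_diff_distrib
      using integrable_iexp_mult[OF int(1), of k] integrable_iexp_mult[OF int(2), of k]
      by (simp only: Bochner_Integration.integral_diff) simp
  qed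
  have "integrable lborel H"
    unfolding H_def using int by auto
  then have "AE \<alpha> in lborel. H \<alpha> = 0"
    using H_far \<open>kmin < kmax\<close> FT_H by (rule AE_zero_if_fourier_transform_zero_on_interval)
  then show ?thesis
    unfolding H_def by eventually_elim simp
qed

end

lemma Icc_subset_if_AE_eq:
  fixes g1 g2 :: "real \<Rightarrow> 'a::zero"
  assumes "a1 < b1" and g2: "\<And>t. t \<notin> {a2..b2} \<Longrightarrow> g2 t = 0" and ae: "AE t in lborel. g1 t = g2 t"
    and null: "{t \<in> {a1..b1}. g1 t = 0} \<in> null_sets lborel"
  shows "{a1..b1} \<subseteq> {a2..b2}"
proof (rule ccontr)
  assume not_subset: "\<not> {a1..b1} \<subseteq> {a2..b2}"
  obtain c d where "c < d" and cd: "{c<..<d} \<subseteq> {a1..b1} - {a2..b2}"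
  proof (cases "a1 < a2")
    case True
    show thesis
      by (rule that[of a1 "min a2 b1"]) (use True \<open>a1 < b1\<close> in auto)
  next
    case False
    with not_subset \<open>a1 < b1\<close> have "b2 < b1"
      by auto
    show thesis
      by (rule that[of "max a1 b2" b1]) (use \<open>b2 < b1\<close> \<open>a1 < b1\<close> in auto)
  qed
  obtain N where N: "{t. g1 t \<noteq> g2 t} \<subseteq> N" "N \<in> null_sets lborel"
  proof (rule AE_E[OF ae])
    fix N assume "{t \<in> space lborel. g1 t \<noteq> g2 t} \<subseteq> N" "emeasure lborel N = 0" "N \<in> sets lborel"
    then show thesis by (intro that[of N]) (auto simp: null_sets_def)
  qed
  \<comment> \<open>On \<open>]c, d[\<close> the function \<open>g\<^sub>2\<close> vanishes, so \<open>g\<^sub>1\<close> vanishes there almost everywhere.\<close>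
  have "{c<..<d} \<subseteq> {t \<in> {a1..b1}. g1 t = 0} \<union> N"
  proof
    fix t assume "t \<in> {c<..<d}"
    with cd g2 have "t \<in> {a1..b1}" "g2 t = 0" by auto
    then show "t \<in> {t \<in> {a1..b1}. g1 t = 0} \<union> N"
      using N(1) by (cases "g1 t = g2 t") auto
  qed
  from null_sets_subset[OF null_sets.Un[OF null N(2)] _ this] have "{c<..<d} \<in> null_sets lborel"
    by simp
  then show False
    using \<open>c < d\<close> by (simp add: null_sets_def)
qed

lemma plane_subset_strip_hull_iff:
  assumes "x \<bullet> x = 1"
  shows "plane x \<alpha> \<subseteq> strip_hull x D \<longleftrightarrow> (INF z\<in>D. z \<bullet> x) \<le> - \<alpha> \<and> - \<alpha> \<le> (SUP z\<in>D. z \<bullet> x)"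
proof
  assume "plane x \<alpha> \<subseteq> strip_hull x D"
  moreover have "(- \<alpha>) *\<^sub>R x \<in> plane x \<alpha>"
    using assms by (simp add: plane_def)
  ultimately show "(INF z\<in>D. z \<bullet> x) \<le> - \<alpha> \<and> - \<alpha> \<le> (SUP z\<in>D. z \<bullet> x)"
    using assms by (auto simp: strip_hull_def)
qed (auto simp: plane_def strip_hull_def)

lemma strip_hull_eq_if_same_planes:
  assumes "x \<bullet> x = 1" and "{\<alpha>. plane x \<alpha> \<subseteq> strip_hull x D1} = {\<alpha>. plane x \<alpha> \<subseteq> strip_hull x D2}"
  shows "strip_hull x D1 = strip_hull x D2"
proof -
  have "y \<in> strip_hull x D \<longleftrightarrow> plane x (- (y \<bullet> x)) \<subseteq> strip_hull x D" for y D
    unfolding plane_subset_strip_hull_iff[OF assms(1)] by (simp add: strip_hull_def)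
  then show ?thesis
    using assms(2) by blast
qed

lemma inner_bounds_strip:
  assumes "bounded D" and "y \<in> D"
  shows "(INF z\<in>D. z \<bullet> x) \<le> y \<bullet> x" and "y \<bullet> x \<le> (SUP z\<in>D. z \<bullet> x)"
proof -
  have "bounded ((\<lambda>z. z \<bullet> x) ` D)"
    using assms(1) by (rule bounded_linear_image) (rule bounded_linear_inner_left)
  then show "(INF z\<in>D. z \<bullet> x) \<le> y \<bullet> x" and "y \<bullet> x \<le> (SUP z\<in>D. z \<bullet> x)"
    using assms(2) by (auto intro: cINF_lower cSUP_upper bounded_imp_bdd_below bounded_imp_bdd_above)
qed

lemma planes_in_strip_hull:
  assumes "x \<bullet> x = 1" "open D" "bounded D" "D \<noteq> {}"
  obtains a b where "a < b" "{\<alpha>. plane x \<alpha> \<subseteq> strip_hull x D} = {a..b}"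
proof -
  obtain p where "p \<in> D"
    using assms(4) by blast
  then obtain r where "r > 0" "ball p r \<subseteq> D"
    using openE[OF assms(2)] by blast
  have "norm x = 1"
    using assms(1) by (simp add: norm_eq_1)
  with \<open>r > 0\<close> have "p + (r/2) *\<^sub>R x \<in> ball p r" "p - (r/2) *\<^sub>R x \<in> ball p r"
    by (simp_all add: dist_norm)
  then have "p - (r/2) *\<^sub>R x \<in> D" "p + (r/2) *\<^sub>R x \<in> D"
    using subsetD[OF \<open>ball p r \<subseteq> D\<close>] by simp_all
  \<comment> \<open>An open set has positive width in every direction.\<close>
  then have "(INF z\<in>D. z \<bullet> x) \<le> (p - (r/2) *\<^sub>R x) \<bullet> x" "(p + (r/2) *\<^sub>R x) \<bullet> x \<le> (SUP z\<in>D. z \<bullet> x)"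
    using inner_bounds_strip[OF assms(3)] by simp_all
  then have "(INF z\<in>D. z \<bullet> x) \<le> p \<bullet> x - r/2" "p \<bullet> x + r/2 \<le> (SUP z\<in>D. z \<bullet> x)"
    using assms(1) by (simp_all add: inner_diff_left inner_add_left)
  then show thesis
  proof (intro that[of "- (SUP z\<in>D. z \<bullet> x)" "- (INF z\<in>D. z \<bullet> x)"])
    show "{\<alpha>. plane x \<alpha> \<subseteq> strip_hull x D} = {- (SUP z\<in>D. z \<bullet> x) .. - (INF z\<in>D. z \<bullet> x)}"
      unfolding plane_subset_strip_hull_iff[OF assms(1)] by auto
  qed (use \<open>r > 0\<close> in linarith)
qed

lemma plane_disjoint_if_not_subset_strip_hull:
  assumes "x \<bullet> x = 1" "bounded D" "\<not> plane x \<alpha> \<subseteq> strip_hull x D"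
  shows "plane x \<alpha> \<inter> D = {}"
proof (rule ccontr)
  assume "plane x \<alpha> \<inter> D \<noteq> {}"
  then obtain y where "y \<in> D" "y \<bullet> x = - \<alpha>"
    by (auto simp: plane_def eq_neg_iff_add_eq_0)
  then show False
    using assms inner_bounds_strip[OF assms(2) \<open>y \<in> D\<close>] plane_subset_strip_hull_iff by metis
qed

lemma admissible_source_strip:
  assumes "admissible_source J D" "x \<bullet> x = 1" "x \<bullet> b1 = 0" "x \<bullet> b2 = 0"
  obtains a b where "a < b" "{\<alpha>. plane x \<alpha> \<subseteq> strip_hull x D} = {a..b}"
    and "\<And>\<alpha>. \<alpha> \<notin> {a..b} \<Longrightarrow> J_hat x b1 b2 e J \<alpha> = 0"
proof -
  have "open D" "bounded D" "D \<noteq> {}" and J0: "\<And>y. y \<notin> D \<Longrightarrow> J y = 0"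
    using assms(1) unfolding admissible_source_def lipschitz_domain_def by blast+
  obtain a b where "a < b" and ab: "{\<alpha>. plane x \<alpha> \<subseteq> strip_hull x D} = {a..b}"
    using planes_in_strip_hull[OF assms(2) \<open>open D\<close> \<open>bounded D\<close> \<open>D \<noteq> {}\<close>] .
  have "J_hat x b1 b2 e J \<alpha> = 0" if "\<alpha> \<notin> {a..b}" for \<alpha>
  proof (rule J_hat_eq_0_if_plane_avoids_support[OF assms(2-4)])
    have "plane x \<alpha> \<inter> D = {}"
      using that ab plane_disjoint_if_not_subset_strip_hull[OF assms(2) \<open>bounded D\<close>] by blast
    then show "J y = 0" if "y \<in> plane x \<alpha>" for y
      using that J0 by blast
  qed
  with \<open>a < b\<close> ab show thesis by (rule that)
qed

lemma strip_hull_eq_if_J_hat_AE_eq: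
  assumes x: "x \<bullet> x = 1" "x \<bullet> b1 = 0" "x \<bullet> b2 = 0"
    and "admissible_source J1 D1" "admissible_source J2 D2"
    and null1: "{\<alpha>. plane x \<alpha> \<subseteq> strip_hull x D1 \<and> J_hat x b1 b2 e J1 \<alpha> = 0} \<in> null_sets lborel"
    and null2: "{\<alpha>. plane x \<alpha> \<subseteq> strip_hull x D2 \<and> J_hat x b1 b2 e J2 \<alpha> = 0} \<in> null_sets lborel"
    and same_J_hat: "AE \<alpha> in lborel. J_hat x b1 b2 e J1 \<alpha> = J_hat x b1 b2 e J2 \<alpha>"
  shows "strip_hull x D1 = strip_hull x D2"
proof -
  obtain lo1 hi1 where "lo1 < hi1" and planes1: "{\<alpha>. plane x \<alpha> \<subseteq> strip_hull x D1} = {lo1..hi1}"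
    and support1: "\<And>\<alpha>. \<alpha> \<notin> {lo1..hi1} \<Longrightarrow> J_hat x b1 b2 e J1 \<alpha> = 0"
    using admissible_source_strip[OF \<open>admissible_source J1 D1\<close> x, where e=e] by blast
  obtain lo2 hi2 where "lo2 < hi2" and planes2: "{\<alpha>. plane x \<alpha> \<subseteq> strip_hull x D2} = {lo2..hi2}"
    and support2: "\<And>\<alpha>. \<alpha> \<notin> {lo2..hi2} \<Longrightarrow> J_hat x b1 b2 e J2 \<alpha> = 0"
    using admissible_source_strip[OF \<open>admissible_source J2 D2\<close> x, where e=e] by blast
  have "{\<alpha>. plane x \<alpha> \<subseteq> strip_hull x D1 \<and> J_hat x b1 b2 e J1 \<alpha> = 0} = {\<alpha> \<in> {lo1..hi1}. J_hat x b1 b2 e J1 \<alpha> = 0}"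
    "{\<alpha>. plane x \<alpha> \<subseteq> strip_hull x D2 \<and> J_hat x b1 b2 e J2 \<alpha> = 0} = {\<alpha> \<in> {lo2..hi2}. J_hat x b1 b2 e J2 \<alpha> = 0}"
    using planes1 planes2 by blast+
  with null1 null2 have null1': "{\<alpha> \<in> {lo1..hi1}. J_hat x b1 b2 e J1 \<alpha> = 0} \<in> null_sets lborel"
    and null2': "{\<alpha> \<in> {lo2..hi2}. J_hat x b1 b2 e J2 \<alpha> = 0} \<in> null_sets lborel"
    by simp_all
  have same_J_hat': "AE \<alpha> in lborel. J_hat x b1 b2 e J2 \<alpha> = J_hat x b1 b2 e J1 \<alpha>"
    using same_J_hat by eventually_elim simp
  have "{lo1..hi1} \<subseteq> {lo2..hi2}"
    by (rule Icc_subset_if_AE_eq[OF \<open>lo1 < hi1\<close> support2 same_J_hat null1'])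
  moreover have "{lo2..hi2} \<subseteq> {lo1..hi1}"
    by (rule Icc_subset_if_AE_eq[OF \<open>lo2 < hi2\<close> support1 same_J_hat' null2'])
  ultimately show ?thesis
    using x(1) planes1 planes2 by (intro strip_hull_eq_if_same_planes) auto
qed

theorem theorem3p1:
  fixes eps mu kmin kmax :: real
    and x0 q0 e :: "real^3"
    and J1 J2 :: "real^3 \<Rightarrow> complex^3"
    and D1 D2 :: "(real^3) set"
  defines "l \<equiv> (1 / norm (cross3 x0 q0)) *\<^sub>R cross3 x0 q0"
  defines "m \<equiv> cross3 x0 l"
  assumes "eps > 0" and "mu > 0" and "0 < kmin" and "kmin < kmax"
    and "norm x0 = 1" and "norm q0 = 1" and "q0 \<bullet> x0 \<noteq> 0"
    and "e \<in> {l, m}"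
    and "admissible_source J1 D1" and "admissible_source J2 D2"
    and "{\<alpha>. plane x0 \<alpha> \<subseteq> strip_hull x0 D1 \<and> J_hat x0 l m e J1 \<alpha> = 0} \<in> null_sets lborel"
    and "{\<alpha>. plane x0 \<alpha> \<subseteq> strip_hull x0 D2 \<and> J_hat x0 l m e J2 \<alpha> = 0} \<in> null_sets lborel"
    and "\<forall>k\<in>{kmin<..<kmax}. cdot e (far_field eps mu x0 k J1) = cdot e (far_field eps mu x0 k J2)"
  shows "strip_hull x0 D1 = strip_hull x0 D2"
proof -
  have x0: "x0 \<bullet> x0 = 1" "x0 \<bullet> l = 0" "x0 \<bullet> m = 0"
    using \<open>norm x0 = 1\<close> by (simp_all add: l_def m_def dot_cross_self power2_norm_eq_inner[symmetric])
  have same_J_hat: "AE \<alpha> in lborel. J_hat x0 l m e J1 \<alpha> = J_hat x0 l m e J2 \<alpha>"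
  proof (cases "cross3 x0 q0 = 0")
    case True
    \<comment> \<open>The hypotheses allow \<open>q0 = \<plusminus>x0\<close>; then \<open>l = m = e = 0\<close> and both \<open>J_hat\<close> vanish.\<close>
    then have "e = 0" using \<open>e \<in> {l, m}\<close> by (auto simp: l_def m_def)
    then show ?thesis by (simp add: J_hat_def plane_integral_def)
  next
    case False
    then interpret orthonormal_frame x0 l m
      unfolding m_def l_def using \<open>norm x0 = 1\<close> by (intro orthonormal_frame_cross3)
    have "e \<bullet> x0 = 0"
      using \<open>e \<in> {l, m}\<close> x0 by (auto simp: inner_commute)
    with \<open>0 < kmin\<close> show ?thesis
      by (intro J_hat_AE_eq_if_far_field_eq[OF _ assms(3,4) _ assms(6,11,12,15)]) simp_all
  qed
  show ?thesis
    by (rule strip_hull_eq_if_J_hat_AE_eq[OF x0 assms(11-14) same_J_hat])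
qed

end
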